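(* Consider the online class matching problem in the divisible setting (described in the context). For every $\gamma \in [0,1]$, there exists an online divisible algorithm that is simultaneously $\left(1 - \frac{e^{\gamma-1}}{\gamma+1}\right)$-USW and $(1-e^{-\gamma})$-CEF.
   Context: Online class matching: an instance is a bipartite graph $G=(N,M,E)$ with a set $N$ of agents (known in advance), a set $M$ of items, and $E \subseteq M \times N$; agent $a$ likes item $o$ iff $(o,a)\in E$. The agents are partitioned into $k$ known classes $N_1,\dots,N_k$. Items arrive one at a time in an adversarially chosen order; when item $o$ arrives, the set of agents liking $o$ is revealed and the algorithm must immediately and irrevocably assign (in the divisible setting, fractions of) $o$ to agents liking it. A fractional matching is $X=(x_{o,a})\in[0,1]^{M\times N}$ supported on $E$ with $\sum_a x_{o,a}\le 1$ for every item $o$ and $\sum_o x_{o,a}\le 1$ for every agent $a$. The value of agent $a$ is $V_a(X)=\sum_o x_{o,a}$ and the class value is $V_i(X)=\sum_{a\in N_i}V_a(X)$. For each class $j$, let $y_j(X)\in[0,1]^M$ with $y_j(X)_o=\sum_{a\in N_j}x_{o,a}$. For $y\in[0,1]^M$, the optimistic valuation $V_i^*(y)$ is the maximum size of a fractional matching using edges of $E$ between $N_i$ and $M$ in which each item $o$ has fractional degree at most $y_o$ and each agent has fractional degree at most $1$. The utilitarian social welfare is $\mathrm{usw}(X)=\sum_i V_i(X)$. A (possibly randomized) online algorithm outputting $X$ is $\alpha$-CEF if on every instance, for all classes $i,j$, $\mathbb{E}[V_i(X)]\ge \alpha\,\mathbb{E}[V_i^*(y_j(X))]$; it is $\beta$-USW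 if on every instance $\mathbb{E}[\mathrm{usw}(X)]\ge \beta\cdot \mathrm{usw}(X^* )$ for every fractional matching $X^*$ of $G$. *)

theory Defs
  imports "HOL-Probability.Probability"
begin

text \<open>The items are the indices 0..<length seq, arriving in this order; item o is
  liked exactly by the agents in seq ! q.\<close>

definition agents :: "'a set list \<Rightarrow> 'a set" where
  "agents cls = \<Union> (set cls)"

definition is_instance :: "'a set list \<Rightarrow> 'a set list \<Rightarrow> bool" where
  "is_instance cls seq \<longleftrightarrow>
     (\<forall>i < length cls. finite (cls ! i)) \<and>
     (\<forall>i < length cls. \<forall>j < length cls. i \<noteq> j \<longrightarrow> cls ! i \<inter> cls ! j = {}) \<and>
     (\<forall>q < length seq. seq ! q \<subseteq> agents cls)"

text \<open>Fractional matching X (X o a = fraction of item o given to agent a) supported on E.\<close>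
definition frac_matching :: "'a set list \<Rightarrow> 'a set list \<Rightarrow> (nat \<Rightarrow> 'a \<Rightarrow> real) \<Rightarrow> bool" where
  "frac_matching cls seq X \<longleftrightarrow>
     (\<forall>q a. 0 \<le> X q a \<and> X q a \<le> 1) \<and>
     (\<forall>q a. X q a \<noteq> 0 \<longrightarrow> q < length seq \<and> a \<in> seq !  q) \<and>
     (\<forall>q. (\<Sum>a\<in>agents cls. X q a) \<le> 1) \<and>
     (\<forall>a. (\<Sum>q<length seq. X q a) \<le> 1)"

definition agent_value :: "'a set list \<Rightarrow> (nat \<Rightarrow> 'a \<Rightarrow> real) \<Rightarrow> 'a \<Rightarrow> real" where
  "agent_value seq X a = (\<Sum>q<length seq. X q a)"

definition class_value :: "'a set list \<Rightarrow> 'a set list \<Rightarrow> (nat \<Rightarrow> 'a \<Rightarrow> real) \<Rightarrow> nat \<Rightarrow> real" where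
  "class_value cls seq X i = (\<Sum>a\<in>cls ! i. agent_value seq X a)"

definition usw :: "'a set list \<Rightarrow> 'a set list \<Rightarrow> (nat \<Rightarrow> 'a \<Rightarrow> real) \<Rightarrow> real" where
  "usw cls seq X = (\<Sum>i<length cls. class_value cls seq X i)"

definition class_alloc :: "'a set list \<Rightarrow> (nat \<Rightarrow> 'a \<Rightarrow> real) \<Rightarrow> nat \<Rightarrow> nat \<Rightarrow> real" where
  "class_alloc cls X j q = (\<Sum>a\<in>cls ! j. X q a)"

text \<open>Optimistic valuation V_i^*(y): the maximum size of a fractional matching between
  class i and the items, using edges of E, with item capacities y and agent capacities 1.\<close>
definition opt_val :: "'a set list \<Rightarrow> 'a set list \<Rightarrow> nat \<Rightarrow> (nat \<Rightarrow> real) \<Rightarrow> real" where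
  "opt_val cls seq i y = Sup {(\<Sum>q<length seq. \<Sum>a\<in>cls ! i. z q a) | z.
      (\<forall>q a. 0 \<le> z q a) \<and>
      (\<forall>q a. z q a \<noteq> 0 \<longrightarrow> q < length seq \<and> a \<in> seq ! q \<and> a \<in> cls ! i) \<and>
      (\<forall>q < length seq. (\<Sum>a\<in>cls ! i. z q a) \<le> y  q) \<and>
      (\<forall>a \<in> cls ! i. (\<Sum>q<length seq. z q a) \<le> 1)}"

text \<open>A deterministic online divisible algorithm: given the (known) classes and the prefix
  of arrived items (neighbour sets, current item last), it outputs the split of the
  current item among the agents.  Being a function of the prefix only makes it online.\<close>
type_synonym 'a online_alg = "'a set list \<Rightarrow> 'a set list \<Rightarrow> 'a \<Rightarrow> real"

definition run :: "'a online_alg \<Rightarrow> 'a set list \<Rightarrow> 'a set list \<Rightarrow> nat \<Rightarrow> 'a \<Rightarrow> real" where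
  "run alg cls seq q a = (if q < length seq then alg cls (take (Suc  q) seq) a else 0)"

definition valid_online_alg :: "'a online_alg \<Rightarrow> bool" where
  "valid_online_alg alg \<longleftrightarrow>
     (\<forall>cls seq. is_instance cls seq \<longrightarrow> frac_matching cls seq (run alg cls seq))"

definition valid_rand_alg :: "'a online_alg pmf \<Rightarrow> bool" where
  "valid_rand_alg P \<longleftrightarrow> (\<forall>alg \<in> set_pmf P. valid_online_alg alg)"

definition is_CEF :: "real \<Rightarrow> 'a online_alg pmf \<Rightarrow> bool" where
  "is_CEF \<alpha> P \<longleftrightarrow> (\<forall>cls seq. is_instance cls seq \<longrightarrow>
     (\<forall>i < length cls. \<forall>j < length cls.
        measure_pmf.expectation P (\<lambda>alg. class_value cls seq (run alg cls seq) i)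
        \<ge> \<alpha> * measure_pmf.expectation P
              (\<lambda>alg. opt_val cls seq i (class_alloc cls (run alg cls seq) j))))"

definition is_USW :: "real \<Rightarrow> 'a online_alg pmf \<Rightarrow> bool" where
  "is_USW \<beta> P \<longleftrightarrow> (\<forall>cls seq. is_instance cls seq \<longrightarrow>
     (\<forall>Xs. frac_matching cls seq Xs \<longrightarrow>
        measure_pmf.expectation P (\<lambda>alg. usw cls seq (run alg cls seq)) \<ge> \<beta> * usw cls seq Xs))"

end

theory Submission
  imports Defs
begin

text \<open>The algorithm water-fills every item. Below the threshold \<gamma> it is balanced between
  the classes: each class raises its own agents to a common level, and all classes that can
  still absorb receive the same amount; what is left of the item raises its agents from \<gamma>
  towards 1. Both guarantees are proved by online primal-dual fitting. The dual value of an
  agent is a potential of its final level (for welfare linear below \<gamma> and exponential above,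
  for envy-freeness exponential up to \<gamma> and constant above), and every item gets a dual
  variable such that the potential gained while the item is allocated plus its dual value is
  at most 1 + usw_slope \<gamma>, resp. exp \<gamma> / (exp \<gamma> - 1), times what it allocates.
  Weak duality then bounds every fractional matching, resp. every matching of class i into the
  share of class j; balance is what keeps that share small while some agent of class i
  stays below \<gamma>.\<close>

section \<open>Water levels\<close>

lemma water_level_exists:
  fixes x :: "'a \<Rightarrow> real"
  assumes "finite A" and "\<forall>a\<in>A. b \<le> x a" and "b \<le> c"
    and "0 \<le> m" and "m \<le> (\<Sum>a\<in>A. max 0 (c - x a))"
  shows "\<exists>L. b \<le> L \<and> L \<le> c \<and> (\<Sum>a\<in>A. max 0 (L - x a)) = m \<and>
           (m = (\<Sum>a\<in>A. max 0 (c - x a)) \<longrightarrow> L = c)"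
proof (cases "m = (\<Sum>a\<in>A. max 0 (c - x a))")
  case True
  then show ?thesis using assms by auto
next
  case False
  have "(\<Sum>a\<in>A. max 0 (b - x a)) = 0"
    using assms(2) by (intro sum.neutral) auto
  moreover have "continuous_on {b..c} (\<lambda>L. \<Sum>a\<in>A. max 0 (L - x a))"
    by (intro continuous_intros)
  ultimately obtain L where "b \<le> L" "L \<le> c" "(\<Sum>a\<in>A. max 0 (L - x a)) = m"
    using IVT'[of "\<lambda>L. \<Sum>a\<in>A. max 0 (L - x a)" b m c] assms by auto
  then show ?thesis using False by auto
qed

lemma budget_level_exists:
  fixes c :: "'i \<Rightarrow> real"
  assumes "finite I" and "\<forall>i\<in>I. 0 \<le> c i" and "0 \<le> m"
  shows "\<exists>s\<ge>0. (\<Sum>i\<in>I. min s (c i)) = min m (\<Sum>i\<in>I. c i) \<and>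
           ((\<Sum>i\<in>I. c i) \<le> m \<longrightarrow> (\<forall>i\<in>I. c i \<le> s))"
proof -
  have le_total: "c i \<le> (\<Sum>i\<in>I. c i)" if "i \<in> I" for i
    using assms that by (intro member_le_sum) auto
  show ?thesis
  proof (cases "(\<Sum>i\<in>I. c i) \<le> m")
    case True
    then show ?thesis using le_total assms
      by (intro exI[of _ "\<Sum>i\<in>I. c i"]) (auto intro: sum.cong sum_nonneg)
  next
    case False
    have "(\<Sum>i\<in>I. min 0 (c i)) = 0" and "(\<Sum>i\<in>I. min (\<Sum>i\<in>I. c i) (c i)) = (\<Sum>i\<in>I. c i)"
      using assms le_total by (auto intro!: sum.neutral sum.cong)
    moreover have "continuous_on {0..\<Sum>i\<in>I. c i} (\<lambda>s. \<Sum>i\<in>I. min s (c i))"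
      by (intro continuous_intros)
    ultimately obtain s where "0 \<le> s" "(\<Sum>i\<in>I. min s (c i)) = m"
      using IVT'[of "\<lambda>s. \<Sum>i\<in>I. min s (c i)" 0 m "\<Sum>i\<in>I. c i"] assms False by auto
    then show ?thesis using False by auto
  qed
qed

section \<open>Online primal-dual accounting\<close>

lemma fractional_weak_duality:
  fixes z :: "nat \<Rightarrow> 'a \<Rightarrow> real"
  assumes "finite A" and z_nonneg: "\<And>q a. 0 \<le> z q a"
    and agent_cap: "\<And>a. a \<in> A \<Longrightarrow> (\<Sum>q<n. z q a) \<le> 1"
    and item_cap: "\<And>q. q < n \<Longrightarrow> (\<Sum>a\<in>A. z q a) \<le> w q"
    and u_nonneg: "\<And>a. a \<in> A \<Longrightarrow> 0 \<le> u a" and \<beta>_nonneg: "\<And>q. q < n \<Longrightarrow> 0 \<le> \<beta> q"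
    and covered: "\<And>q a. q < n \<Longrightarrow> a \<in> A \<Longrightarrow> z q a \<noteq> 0 \<Longrightarrow> 1 \<le> u a + \<beta> q"
  shows "(\<Sum>q<n. \<Sum>a\<in>A. z q a) \<le> (\<Sum>a\<in>A. u a) + (\<Sum>q<n. w q * \<beta> q)"
proof -
  have "(\<Sum>q<n. \<Sum>a\<in>A. z q a) \<le> (\<Sum>q<n. \<Sum>a\<in>A. z q a * u a + z q a * \<beta> q)"
  proof (intro sum_mono)
    fix q a assume "q \<in> {..<n}" "a \<in> A"
    show "z q a \<le> z q a * u a + z q a * \<beta> q"
    proof (cases "z q a = 0")
      case False
      then have "z q a * 1 \<le> z q a * (u a + \<beta> q)"
        using covered \<open>q \<in> {..<n}\<close> \<open>a \<in> A\<close> z_nonneg[of q a] by (intro mult_left_mono) auto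
      then show ?thesis by (simp add: algebra_simps)
    qed simp
  qed
  also have "\<dots> = (\<Sum>a\<in>A. u a * (\<Sum>q<n. z q a)) + (\<Sum>q<n. \<beta> q * (\<Sum>a\<in>A. z q a))"
    by (simp add: sum.distrib sum_distrib_left sum.swap[of _ "{..<n}"] mult.commute)
  also have "\<dots> \<le> (\<Sum>a\<in>A. u a) + (\<Sum>q<n. w q * \<beta> q)"
  proof (intro add_mono sum_mono)
    show "u a * (\<Sum>q<n. z q a) \<le> u a" if "a \<in> A" for a
      using u_nonneg agent_cap that mult_left_le by blast
    show "\<beta> q * (\<Sum>a\<in>A. z q a) \<le> w q * \<beta> q" if "q \<in> {..<n}" for q
      using \<beta>_nonneg item_cap that by (simp add: mult.commute mult_left_mono)
  qed
  finally show ?thesis .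
qed

text \<open>Here \<beta> is the dual variable of an item of capacity w that raises the levels x by d.\<close>

definition dual_step ::
  "(real \<Rightarrow> real) \<Rightarrow> 'a set \<Rightarrow> ('a \<Rightarrow> real) \<Rightarrow> ('a \<Rightarrow> real) \<Rightarrow> 'a set \<Rightarrow> real \<Rightarrow> real \<Rightarrow> bool"
  where "dual_step \<Phi> A x d T w R \<longleftrightarrow> (\<exists>\<beta>\<ge>0. (\<forall>a\<in>T. 1 \<le> \<Phi> (x a + d a) + \<beta>) \<and>
           (\<Sum>a\<in>A. \<Phi> (x a + d a) - \<Phi> (x a)) + w * \<beta> \<le> R * (\<Sum>a\<in>A. d a))"

text \<open>The dual solution is u a = \<Phi> (final level of a) together with the variables \<beta> of
  the items; the sum of the potential gains telescopes to the sum of the u a.\<close>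

lemma online_primal_dual_bound:
  fixes z d :: "nat \<Rightarrow> 'a \<Rightarrow> real" and \<Phi> :: "real \<Rightarrow> real"
  assumes "finite A" and "mono \<Phi>" and "\<Phi> 0 = 0"
    and d_nonneg: "\<And>q a. q < n \<Longrightarrow> 0 \<le> d q a"
    and "\<And>q a. 0 \<le> z q a"
    and "\<And>a. a \<in> A \<Longrightarrow> (\<Sum>q<n. z q a) \<le> 1"
    and "\<And>q. q < n \<Longrightarrow> (\<Sum>a\<in>A. z q a) \<le> w q"
    and z_support: "\<And>q a. q < n \<Longrightarrow> a \<in> A \<Longrightarrow> z q a \<noteq> 0 \<Longrightarrow> a \<in> T q"
    and dual: "\<And>q. q < n \<Longrightarrow> dual_step \<Phi> A (\<lambda>a. \<Sum>k<q. d k a) (d q) (T q) (w q) R"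
  shows "(\<Sum>q<n. \<Sum>a\<in>A. z q a) \<le> R * (\<Sum>q<n. \<Sum>a\<in>A. d q a)"
proof -
  define level where "level q a = (\<Sum>k<q. d k a)" for q a
  have level_Suc: "level (Suc q) a = level q a + d q a" for q a
    unfolding level_def by simp
  have "\<forall>q\<in>{..<n}. \<exists>\<beta>\<ge>0. (\<forall>a\<in>T q. 1 \<le> \<Phi> (level q a + d q a) + \<beta>) \<and>
       (\<Sum>a\<in>A. \<Phi> (level q a + d q a) - \<Phi> (level q a)) + w q * \<beta> \<le> R * (\<Sum>a\<in>A. d q a)"
    using dual unfolding dual_step_def level_def by blast
  from bchoice[OF this] obtain \<beta> where "\<forall>q\<in>{..<n}. 0 \<le> \<beta> q \<and>
       (\<forall>a\<in>T q. 1 \<le> \<Phi> (level q a + d q a) + \<beta> q) \<and>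
       (\<Sum>a\<in>A. \<Phi> (level q a + d q a) - \<Phi> (level q a)) + w q * \<beta> q \<le> R * (\<Sum>a\<in>A. d q a)"
    by blast
  then have \<beta>: "\<And>q. q < n \<Longrightarrow> 0 \<le> \<beta> q \<and>
       (\<forall>a\<in>T q. 1 \<le> \<Phi> (level (Suc q) a) + \<beta> q) \<and>
       (\<Sum>a\<in>A. \<Phi> (level (Suc q) a) - \<Phi> (level q a)) + w q * \<beta> q \<le> R * (\<Sum>a\<in>A. d q a)"
    unfolding level_Suc by simp
  have level_le: "level q a \<le> level n a" if "q \<le> n" for q a
    unfolding level_def using that d_nonneg by (intro sum_mono2) auto
  have "(\<Sum>q<n. \<Sum>a\<in>A. z q a) \<le> (\<Sum>a\<in>A. \<Phi> (level n a)) + (\<Sum>q<n. w q * \<beta> q)"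
  proof (rule fractional_weak_duality)
    show "0 \<le> \<Phi> (level n a)" for a
      using monoD[OF \<open>mono \<Phi>\<close> level_le[of 0 a]] \<open>\<Phi> 0 = 0\<close> by (simp add: level_def)
    show "1 \<le> \<Phi> (level n a) + \<beta> q" if "q < n" "a \<in> A" "z q a \<noteq> 0" for q a
      using \<beta>[of q] z_support[OF that] that monoD[OF \<open>mono \<Phi>\<close> level_le[of "Suc q" a]] by auto
  qed (use assms \<beta> in auto)
  also have "(\<Sum>a\<in>A. \<Phi> (level n a)) = (\<Sum>a\<in>A. \<Sum>q<n. \<Phi> (level (Suc q) a) - \<Phi> (level q a))"
  proof (intro sum.cong refl)
    fix a
    have "\<Phi> (level 0 a) = 0" using \<open>\<Phi> 0 = 0\<close> by (simp add: level_def)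
    then show "\<Phi> (level n a) = (\<Sum>q<n. \<Phi> (level (Suc q) a) - \<Phi> (level q a))"
      by (simp add: sum_lessThan_telescope[of "\<lambda>q. \<Phi> (level q a)"])
  qed
  also have "\<dots> = (\<Sum>q<n. \<Sum>a\<in>A. \<Phi> (level (Suc q) a) - \<Phi> (level q a))"
    by (rule sum.swap)
  also have "\<dots> + (\<Sum>q<n. w q * \<beta> q) \<le> (\<Sum>q<n. R * (\<Sum>a\<in>A. d q a))"
    unfolding sum.distrib[symmetric] using \<beta> by (intro sum_mono) auto
  finally show ?thesis by (simp add: sum_distrib_left)
qed

section \<open>Potential functions\<close>

lemma exp_diff_le:
  fixes a b :: real
  assumes "a \<le> b"
  shows "exp b - exp a \<le> (b - a) * exp b"
proof -
  have "exp b * (1 + (a - b)) \<le> exp b * exp (a - b)"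
    by (intro mult_left_mono exp_ge_add_one_self) simp
  also have "exp b * exp (a - b) = exp a" by (simp add: exp_add[symmetric])
  finally show ?thesis by (simp add: algebra_simps)
qed

text \<open>The slope is chosen so that the two branches of the potential meet at \<gamma>;
  then 1 / (1 + usw_slope \<gamma>) = 1 - exp (\<gamma> - 1) / (\<gamma> + 1) is the welfare ratio.\<close>

definition usw_slope :: "real \<Rightarrow> real" where
  "usw_slope \<gamma> = exp (\<gamma> - 1) / (1 + \<gamma> - exp (\<gamma> - 1))"

definition usw_potential :: "real \<Rightarrow> real \<Rightarrow> real" where
  "usw_potential \<gamma> t =
     (if t \<le> \<gamma> then usw_slope \<gamma> * t else (1 + usw_slope \<gamma>) * exp (t - 1) - usw_slope \<gamma>)"

context
  fixes \<gamma> :: real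
  assumes gamma_nonneg: "0 \<le> \<gamma>" and gamma_le_one: "\<gamma> \<le> 1"
begin

lemma usw_slope_denominator_pos: "0 < 1 + \<gamma> - exp (\<gamma> - 1)"
proof (cases "\<gamma> = 0")
  case False
  then have "0 < \<gamma>" using gamma_nonneg by simp
  moreover have "exp (\<gamma> - 1) \<le> 1" using gamma_le_one by simp
  ultimately show ?thesis by linarith
qed simp

lemma usw_slope_nonneg: "0 \<le> usw_slope \<gamma>"
  unfolding usw_slope_def using usw_slope_denominator_pos by simp

lemma usw_potential_at_gamma:
  "(1 + usw_slope \<gamma>) * exp (\<gamma> - 1) - usw_slope \<gamma> = usw_slope \<gamma> * \<gamma>"
proof -
  define E where "E = exp (\<gamma> - 1)"
  define D where "D = 1 + \<gamma> - E"
  have "D \<noteq> 0" using usw_slope_denominator_pos unfolding D_def E_def by simp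
  then have "(1 + E / D) * E - E / D = ((D + E) * E - E) / D"
    by (simp add: field_simps)
  also have "\<dots> = E / D * \<gamma>" unfolding D_def by (simp add: algebra_simps)
  finally show ?thesis unfolding usw_slope_def E_def[symmetric] D_def[symmetric] .
qed

lemma usw_ratio: "1 - exp (\<gamma> - 1) / (\<gamma> + 1) = 1 / (1 + usw_slope \<gamma>)"
  using usw_slope_denominator_pos gamma_nonneg unfolding usw_slope_def
  by (simp add: field_simps)

lemma usw_potential_below: "t \<le> \<gamma> \<Longrightarrow> usw_potential \<gamma> t = usw_slope \<gamma> * t"
  unfolding usw_potential_def by simp

lemma usw_potential_above:
  "\<gamma> \<le> t \<Longrightarrow> usw_potential \<gamma> t = (1 + usw_slope \<gamma>) * exp (t - 1) - usw_slope \<gamma>"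
  unfolding usw_potential_def using usw_potential_at_gamma by auto

lemma usw_slope_le:
  assumes "\<gamma> \<le> L"
  shows "usw_slope \<gamma> \<le> (1 + usw_slope \<gamma>) * exp (L - 1)"
proof -
  have "usw_slope \<gamma> \<le> usw_slope \<gamma> * \<gamma> + usw_slope \<gamma>"
    using usw_slope_nonneg gamma_nonneg by simp
  also have "\<dots> = (1 + usw_slope \<gamma>) * exp (\<gamma> - 1)"
    using usw_potential_at_gamma by simp
  also have "\<dots> \<le> (1 + usw_slope \<gamma>) * exp (L - 1)"
    using assms usw_slope_nonneg by (intro mult_left_mono) auto
  finally show ?thesis .
qed

lemma mono_usw_potential: "mono (usw_potential \<gamma>)"
proof
  fix s t :: real assume "s \<le> t"
  consider "t \<le> \<gamma>" | "s \<le> \<gamma>" "\<gamma> \<le> t" | "\<gamma> \<le> s" by linarith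
  then show "usw_potential \<gamma> s \<le> usw_potential \<gamma> t"
  proof cases
    case 1
    then show ?thesis using \<open>s \<le> t\<close> usw_slope_nonneg
      by (simp add: usw_potential_below mult_left_mono)
  next
    case 2
    have "usw_potential \<gamma> s \<le> usw_slope \<gamma> * \<gamma>"
      using 2 usw_slope_nonneg by (simp add: usw_potential_below mult_left_mono)
    also have "\<dots> = (1 + usw_slope \<gamma>) * exp (\<gamma> - 1) - usw_slope \<gamma>"
      by (rule usw_potential_at_gamma[symmetric])
    also have "\<dots> \<le> usw_potential \<gamma> t"
      using 2 usw_slope_nonneg by (simp add: usw_potential_above mult_left_mono)
    finally show ?thesis .
  next
    case 3
    then show ?thesis using \<open>s \<le> t\<close> usw_slope_nonneg
      by (simp add: usw_potential_above mult_left_mono)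
  qed
qed

lemma usw_potential_zero: "usw_potential \<gamma> 0 = 0"
  using usw_potential_below gamma_nonneg by simp

lemma usw_potential_one: "usw_potential \<gamma> 1 = 1"
  using usw_potential_above gamma_le_one by simp

lemma usw_potential_nonneg: "0 \<le> t \<Longrightarrow> 0 \<le> usw_potential \<gamma> t"
  using monoD[OF mono_usw_potential, of 0 t] usw_potential_zero by simp

lemma usw_potential_increase:
  assumes "0 \<le> d1" "0 \<le> d2" "0 < d1 \<Longrightarrow> x + d1 \<le> \<gamma>"
    and "0 < d2 \<Longrightarrow> \<gamma> \<le> x + d1 \<and> x + d1 + d2 \<le> L"
  shows "usw_potential \<gamma> (x + d1 + d2) - usw_potential \<gamma> x
           \<le> usw_slope \<gamma> * d1 + (1 + usw_slope \<gamma>) * exp (L - 1) * d2"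
proof -
  have first: "usw_potential \<gamma> (x + d1) - usw_potential \<gamma> x = usw_slope \<gamma> * d1"
  proof (cases "d1 = 0")
    case False
    then show ?thesis using assms(1,3) by (simp add: usw_potential_below algebra_simps)
  qed simp
  have "usw_potential \<gamma> (x + d1 + d2) - usw_potential \<gamma> (x + d1)
          \<le> (1 + usw_slope \<gamma>) * exp (L - 1) * d2"
  proof (cases "d2 = 0")
    case False
    then have le: "\<gamma> \<le> x + d1" "x + d1 + d2 \<le> L" using assms(2,4) by auto
    then have "usw_potential \<gamma> (x + d1 + d2) - usw_potential \<gamma> (x + d1) =
        (1 + usw_slope \<gamma>) * (exp (x + d1 + d2 - 1) - exp (x + d1 - 1))"
      using assms(2) by (simp add: usw_potential_above algebra_simps)
    also have "\<dots> \<le> (1 + usw_slope \<gamma>) * (d2 * exp (L - 1))"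
      using exp_diff_le[of "x + d1 - 1" "x + d1 + d2 - 1"] le assms(2) usw_slope_nonneg
        order_trans[OF _ mult_left_mono[of "exp (x + d1 + d2 - 1)" "exp (L - 1)" d2]]
      by (intro mult_left_mono) auto
    finally show ?thesis by (simp add: algebra_simps)
  qed simp
  with first show ?thesis by simp
qed

end

definition cef_potential :: "real \<Rightarrow> real \<Rightarrow> real" where
  "cef_potential \<gamma> t = (exp (min t \<gamma>) - 1) / (exp \<gamma> - 1)"

context
  fixes \<gamma> :: real
  assumes gamma_pos: "0 < \<gamma>"
begin

lemma cef_denominator_pos: "0 < exp \<gamma> - 1"
  using gamma_pos by simp

lemma mono_cef_potential: "mono (cef_potential \<gamma>)"
  unfolding cef_potential_def using cef_denominator_pos
  by (intro monoI divide_right_mono) auto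

lemma cef_potential_zero: "cef_potential \<gamma> 0 = 0"
  unfolding cef_potential_def using gamma_pos by simp

lemma cef_potential_above: "\<gamma> \<le> t \<Longrightarrow> cef_potential \<gamma> t = 1"
  unfolding cef_potential_def using cef_denominator_pos by simp

lemma cef_potential_le_one: "cef_potential \<gamma> t \<le> 1"
  unfolding cef_potential_def using cef_denominator_pos by (simp add: divide_le_eq_1)

lemma cef_potential_lipschitz:
  assumes "x \<le> y"
  shows "cef_potential \<gamma> y - cef_potential \<gamma> x \<le> (y - x) * (exp \<gamma> / (exp \<gamma> - 1))"
proof -
  have "exp (min y \<gamma>) - exp (min x \<gamma>) \<le> (min y \<gamma> - min x \<gamma>) * exp (min y \<gamma>)"
    using assms by (intro exp_diff_le) auto
  also have "\<dots> \<le> (y - x) * exp \<gamma>"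
    using assms by (intro mult_mono) (auto simp: min_def)
  finally show ?thesis
    using cef_denominator_pos unfolding cef_potential_def
    by (simp add: diff_divide_distrib[symmetric] divide_right_mono)
qed

lemma cef_potential_step:
  assumes "0 \<le> d" "x + d \<le> L" "L \<le> \<gamma>"
  shows "cef_potential \<gamma> (x + d) - cef_potential \<gamma> x \<le> d * (exp L / (exp \<gamma> - 1))"
proof -
  have "exp (x + d) - exp x \<le> d * exp L"
    using exp_diff_le[of x "x + d"] assms mult_left_mono[of "exp (x + d)" "exp L" d] by simp
  then show ?thesis
    using assms cef_denominator_pos unfolding cef_potential_def
    by (simp add: diff_divide_distrib[symmetric] divide_right_mono)
qed

end

section \<open>Splitting one item\<close>

lemma agents_conv_classes: "agents cls = (\<Union>i<length cls. cls ! i)"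
  unfolding agents_def set_conv_nth by auto

lemma sum_agents_by_class:
  fixes f :: "'a \<Rightarrow> real"
  assumes "\<forall>i<length cls. finite (cls ! i)"
    and "\<forall>i<length cls. \<forall>j<length cls. i \<noteq> j \<longrightarrow> cls ! i \<inter> cls ! j = {}"
    and "S \<subseteq> agents cls"
  shows "(\<Sum>a\<in>S. f a) = (\<Sum>i<length cls. \<Sum>a\<in>S \<inter> cls ! i. f a)"
proof -
  have "S = (\<Union>i<length cls. S \<inter> cls ! i)"
    using assms(3) agents_conv_classes[of cls] by auto
  then have "(\<Sum>a\<in>S. f a) = (\<Sum>a\<in>(\<Union>i<length cls. S \<inter> cls ! i). f a)" by simp
  also have "\<dots> = (\<Sum>i<length cls. \<Sum>a\<in>S \<inter> cls ! i. f a)"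
    by (rule sum.UNION_disjoint) (use assms(1,2) in auto)
  finally show ?thesis .
qed

lemma sum_restrict_to_support:
  fixes f :: "'a \<Rightarrow> real"
  assumes "finite A" and "\<And>a. a \<notin> S \<Longrightarrow> f a = 0"
  shows "(\<Sum>a\<in>A. f a) = (\<Sum>a\<in>A \<inter> S. f a)"
  by (rule sum.mono_neutral_right) (use assms in auto)

text \<open>In the first phase each class water-fills
  its agents in S up to a common level L \<le> \<gamma>, and a class whose level stays below \<gamma>
  receives at least as much as any other class; in the second phase the rest of the item
  water-fills all agents of S from \<gamma> towards 1.\<close>

locale first_phase =
  fixes cls :: "'a set list" and \<gamma> :: real and x :: "'a \<Rightarrow> real"
    and S :: "'a set" and d1 :: "'a \<Rightarrow> real"
  assumes gamma_nonneg: "0 \<le> \<gamma>" and gamma_le_one: "\<gamma> \<le> 1"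
    and x_nonneg: "0 \<le> x a"
    and d1_nonneg: "0 \<le> d1 a"
    and d1_outside: "a \<notin> S \<Longrightarrow> d1 a = 0"
    and d1_below: "0 < d1 a \<Longrightarrow> x a + d1 a \<le> \<gamma>"
    and class_level: "i < length cls \<Longrightarrow> \<exists>L\<le>\<gamma>.
       (\<forall>a\<in>S \<inter> cls ! i. L \<le> x a + d1 a) \<and>
       (\<forall>a\<in>cls ! i. 0 < d1 a \<longrightarrow> x a + d1 a \<le> L) \<and>
       (L < \<gamma> \<longrightarrow> (\<forall>j<length cls. (\<Sum>a\<in>cls ! j. d1 a) \<le> (\<Sum>a\<in>cls ! i. d1 a)))"
    and first_phase_total: "(\<Sum>a\<in>S. d1 a) = 1 \<or>
       (\<Sum>a\<in>S. d1 a) < 1 \<and> (\<forall>a\<in>S. \<gamma> \<le> x a + d1 a)"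

locale item_split = first_phase cls \<gamma> x S d1
  for cls :: "'a set list" and \<gamma> :: real and x :: "'a \<Rightarrow> real"
    and S :: "'a set" and d1 :: "'a \<Rightarrow> real" +
  fixes d2 :: "'a \<Rightarrow> real"
  assumes d2_nonneg: "0 \<le> d2 a"
    and d2_outside: "a \<notin> S \<Longrightarrow> d2 a = 0"
    and level_le_one: "a \<in> S \<Longrightarrow> x a + d1 a + d2 a \<le> 1"
    and total_le_one: "(\<Sum>a\<in>S. d1 a + d2 a) \<le> 1"
    and d2_above: "0 < d2 a \<Longrightarrow> \<gamma> \<le> x a + d1 a"
    and second_phase: "(\<Sum>a\<in>S. d1 a) = 1 \<and> (\<forall>a. d2 a = 0) \<or>
       (\<exists>L\<ge>\<gamma>. L \<le> 1 \<and> (\<forall>a\<in>S. L \<le> x a + d1 a + d2 a) \<and>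
          (\<forall>a. 0 < d2 a \<longrightarrow> x a + d1 a + d2 a \<le> L) \<and>
          ((\<Sum>a\<in>S. d1 a + d2 a) = 1 \<or> L = 1))"

lemma classwise_function_exists:
  assumes "\<forall>i<length cls. \<forall>j<length cls. i \<noteq> j \<longrightarrow> cls ! i \<inter> cls ! j = {}"
  shows "\<exists>f. \<forall>i<length cls. \<forall>a\<in>cls ! i. f a = g i a"
proof -
  define class_of where "class_of a = (SOME i. i < length cls \<and> a \<in> cls ! i)" for a
  have "class_of a = i" if "i < length cls" "a \<in> cls ! i" for i a
  proof -
    have "class_of a < length cls \<and> a \<in> cls ! class_of a"
      unfolding class_of_def by (rule someI[of _ i]) (use that in simp)
    then show ?thesis using assms that by blast
  qed
  then show ?thesis by (intro exI[of _ "\<lambda>a. g (class_of a) a"]) simp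
qed

text \<open>Class i receives min s (fill \<gamma> i) for a common budget s.\<close>

lemma balanced_class_levels:
  fixes x :: "'a \<Rightarrow> real" and A :: "nat \<Rightarrow> 'a set"
  defines "fill L i \<equiv> \<Sum>a\<in>A i. max 0 (L - x a)"
  assumes "\<And>i. finite (A i)" and "\<And>a. 0 \<le> x a" and "0 \<le> \<gamma>"
  obtains Lv where "\<And>i. Lv i \<le> \<gamma>"
    and "(\<Sum>i<n. fill (Lv i) i) = min 1 (\<Sum>i<n. fill \<gamma> i)"
    and "\<And>i j. Lv i < \<gamma> \<Longrightarrow> fill (Lv j) j \<le> fill (Lv i) i"
    and "\<And>i. (\<Sum>i<n. fill \<gamma> i) < 1 \<Longrightarrow> i < n \<Longrightarrow> Lv i = \<gamma>"
proof -
  have cap_nonneg: "0 \<le> fill \<gamma> i" for i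
    unfolding fill_def by (intro sum_nonneg) simp
  have "\<exists>s\<ge>0. (\<Sum>i<n. min s (fill \<gamma> i)) = min 1 (\<Sum>i<n. fill \<gamma> i) \<and>
          ((\<Sum>i<n. fill \<gamma> i) \<le> 1 \<longrightarrow> (\<forall>i\<in>{..<n}. fill \<gamma> i \<le> s))"
    using cap_nonneg by (intro budget_level_exists) auto
  then obtain s where "0 \<le> s" and s: "(\<Sum>i<n. min s (fill \<gamma> i)) = min 1 (\<Sum>i<n. fill \<gamma> i)"
    and all_full: "(\<Sum>i<n. fill \<gamma> i) \<le> 1 \<Longrightarrow> \<forall>i<n. fill \<gamma> i \<le> s"
    by auto
  have "\<exists>L. 0 \<le> L \<and> L \<le> \<gamma> \<and> fill L i = min s (fill \<gamma> i) \<and> (min s (fill \<gamma> i) = fill \<gamma> i \<longrightarrow> L = \<gamma>)"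
    for i
    unfolding fill_def using assms(2-4) \<open>0 \<le> s\<close>
    by (intro water_level_exists) (auto simp: min_le_iff_disj intro: sum_nonneg)
  then obtain Lv where Lv: "\<And>i. Lv i \<le> \<gamma>" and Lv_fill: "\<And>i. fill (Lv i) i = min s (fill \<gamma> i)"
    and Lv_full: "\<And>i. min s (fill \<gamma> i) = fill \<gamma> i \<Longrightarrow> Lv i = \<gamma>"
    by metis
  show ?thesis
  proof (rule that[OF Lv])
    show "(\<Sum>i<n. fill (Lv i) i) = min 1 (\<Sum>i<n. fill \<gamma> i)"
      using s by (simp add: Lv_fill)
    show "fill (Lv j) j \<le> fill (Lv i) i" if "Lv i < \<gamma>" for i j
    proof -
      have "min s (fill \<gamma> i) \<noteq> fill \<gamma> i" using that Lv_full by force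
      then show ?thesis by (auto simp: Lv_fill min_def split: if_splits)
    qed
    show "Lv i = \<gamma>" if "(\<Sum>i<n. fill \<gamma> i) < 1" "i < n" for i
      using all_full that by (intro Lv_full) (simp add: min_absorb2)
  qed
qed

lemma first_phase_exists:
  fixes x :: "'a \<Rightarrow> real"
  assumes fin: "\<forall>i<length cls. finite (cls ! i)"
    and disj: "\<forall>i<length cls. \<forall>j<length cls. i \<noteq> j \<longrightarrow> cls ! i \<inter> cls ! j = {}"
    and S: "S \<subseteq> agents cls" and x: "\<And>a. 0 \<le> x a" and \<gamma>: "0 \<le> \<gamma>" "\<gamma> \<le> 1"
  shows "\<exists>d1. first_phase cls \<gamma> x S d1"
proof -
  define n where "n = length cls"
  define A where "A i = S \<inter> cls ! i" for i
  define fill where "fill L i = (\<Sum>a\<in>A i. max 0 (L - x a))" for L i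
  have "finite (agents cls)"
    unfolding agents_conv_classes using fin by blast
  then have "finite (A i)" for i unfolding A_def using S by (blast intro: finite_subset)
  then obtain Lv where Lv: "\<And>i. Lv i \<le> \<gamma>"
    and total: "(\<Sum>i<n. fill (Lv i) i) = min 1 (\<Sum>i<n. fill \<gamma> i)"
    and balanced: "\<And>i j. Lv i < \<gamma> \<Longrightarrow> fill (Lv j) j \<le> fill (Lv i) i"
    and all_full: "\<And>i. (\<Sum>i<n. fill \<gamma> i) < 1 \<Longrightarrow> i < n \<Longrightarrow> Lv i = \<gamma>"
    using balanced_class_levels[of A x \<gamma> n] x \<gamma> unfolding fill_def by blast
  obtain f where f: "\<And>i a. i < n \<Longrightarrow> a \<in> cls ! i \<Longrightarrow> f a = max 0 (Lv i - x a)"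
    using classwise_function_exists[OF disj, of "\<lambda>i a. max 0 (Lv i - x a)"] unfolding n_def by blast
  define d1 where "d1 a = (if a \<in> S then f a else 0)" for a
  have d1_class: "d1 a = max 0 (Lv i - x a)" if "i < n" "a \<in> A i" for i a
    using that f unfolding d1_def A_def by auto
  have d1_outside: "a \<notin> S \<Longrightarrow> d1 a = 0" for a
    unfolding d1_def by simp
  have in_class: "\<exists>i<n. a \<in> A i" if "a \<in> S" for a
    using that S agents_conv_classes[of cls] unfolding A_def n_def by auto
  have A_sum: "(\<Sum>a\<in>A i. d1 a) = fill (Lv i) i" if "i < n" for i
    using d1_class[OF that] unfolding fill_def by simp
  have class_sum: "(\<Sum>a\<in>cls ! i. d1 a) = fill (Lv i) i" if "i < n" for i
    using sum_restrict_to_support[of "cls ! i" S d1] fin that d1_outside A_sum[OF that]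
    unfolding A_def n_def by (simp add: Int_commute)
  have S_sum: "(\<Sum>a\<in>S. d1 a) = min 1 (\<Sum>i<n. fill \<gamma> i)"
    using sum_agents_by_class[OF fin disj S, of d1] A_sum total
    unfolding A_def n_def by simp
  show ?thesis
  proof (intro exI[of _ d1] first_phase.intro)
    fix a
    show "0 \<le> d1 a"
    proof (cases "a \<in> S")
      case True
      then obtain i where "i < n" "a \<in> A i" using in_class by blast
      then show ?thesis using d1_class by simp
    qed (simp add: d1_def)
    show "x a + d1 a \<le> \<gamma>" if pos: "0 < d1 a"
    proof -
      obtain i where "i < n" "a \<in> A i" using in_class pos d1_outside by force
      then show ?thesis using d1_class Lv pos by (auto simp: max_def split: if_splits)
    qed
  next
    fix i assume i: "i < length cls"
    show "\<exists>L\<le>\<gamma>. (\<forall>a\<in>S \<inter> cls ! i. L \<le> x a + d1 a) \<and>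
       (\<forall>a\<in>cls ! i. 0 < d1 a \<longrightarrow> x a + d1 a \<le> L) \<and>
       (L < \<gamma> \<longrightarrow> (\<forall>j<length cls. (\<Sum>a\<in>cls ! j. d1 a) \<le> (\<Sum>a\<in>cls ! i. d1 a)))"
    proof (intro exI[of _ "Lv i"] conjI ballI impI allI)
      show "Lv i \<le> x a + d1 a" if "a \<in> S \<inter> cls ! i" for a
        using d1_class i that unfolding A_def n_def by simp
      show "x a + d1 a \<le> Lv i" if a: "a \<in> cls ! i" and pos: "0 < d1 a" for a
      proof -
        have "a \<in> A i" using a pos d1_outside unfolding A_def by force
        then show ?thesis using d1_class i pos unfolding n_def by (simp add: max_def split: if_splits)
      qed
      show "(\<Sum>a\<in>cls ! j. d1 a) \<le> (\<Sum>a\<in>cls ! i. d1 a)" if "Lv i < \<gamma>" "j < length cls" for j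
        using balanced[OF that(1)] class_sum i that(2) unfolding n_def by simp
    qed (rule Lv)
  next
    have "\<gamma> \<le> x a + d1 a" if "(\<Sum>i<n. fill \<gamma> i) < 1" "a \<in> S" for a
    proof -
      obtain i where "i < n" "a \<in> A i" using in_class \<open>a \<in> S\<close> by blast
      then show ?thesis using d1_class all_full[OF that(1)] by simp
    qed
    then show "(\<Sum>a\<in>S. d1 a) = 1 \<or> (\<Sum>a\<in>S. d1 a) < 1 \<and> (\<forall>a\<in>S. \<gamma> \<le> x a + d1 a)"
      using S_sum by (cases "1 \<le> (\<Sum>i<n. fill \<gamma> i)") auto
  qed (use x \<gamma> d1_outside in auto)
qed

lemma (in first_phase) first_phase_le_one: "x a \<le> 1 \<Longrightarrow> x a + d1 a \<le> 1"
  using d1_nonneg[of a] d1_below[of a] gamma_le_one by force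

lemma item_split_exists:
  fixes x :: "'a \<Rightarrow> real"
  assumes fin: "\<forall>i<length cls. finite (cls ! i)"
    and disj: "\<forall>i<length cls. \<forall>j<length cls. i \<noteq> j \<longrightarrow> cls ! i \<inter> cls ! j = {}"
    and S: "S \<subseteq> agents cls" and x: "\<And>a. 0 \<le> x a" "\<And>a. x a \<le> 1"
    and \<gamma>: "0 \<le> \<gamma>" "\<gamma> \<le> 1"
  shows "\<exists>d1 d2. item_split cls \<gamma> x S d1 d2"
proof -
  obtain d1 where "first_phase cls \<gamma> x S d1"
    using first_phase_exists[OF fin disj S, where x=x and \<gamma>=\<gamma>] x \<gamma> by blast
  then interpret first_phase cls \<gamma> x S d1 .
  have finS: "finite S"
    using S fin unfolding agents_conv_classes by (blast intro: finite_subset)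
  have le_one: "x a + d1 a \<le> 1" for a
    using first_phase_le_one x(2) .
  consider "(\<Sum>a\<in>S. d1 a) = 1" | "(\<Sum>a\<in>S. d1 a) < 1" "\<forall>a\<in>S. \<gamma> \<le> x a + d1 a"
    using first_phase_total by blast
  then show ?thesis
  proof cases
    case 1
    have "item_split cls \<gamma> x S d1 (\<lambda>_. 0)"
      by unfold_locales (use 1 le_one in auto)
    then show ?thesis by blast
  next
    case 2
    define z where "z a = x a + d1 a" for a
    define m where "m = min (1 - (\<Sum>a\<in>S. d1 a)) (\<Sum>a\<in>S. max 0 (1 - z a))"
    have "\<exists>L\<ge>\<gamma>. L \<le> 1 \<and> (\<Sum>a\<in>S. max 0 (L - z a)) = m \<and>
            (m = (\<Sum>a\<in>S. max 0 (1 - z a)) \<longrightarrow> L = 1)"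
      using 2 \<gamma> by (intro water_level_exists[OF finS]) (auto simp: z_def m_def intro: sum_nonneg)
    then obtain L where L: "\<gamma> \<le> L" "L \<le> 1" and L_sum: "(\<Sum>a\<in>S. max 0 (L - z a)) = m"
      and L_full: "m = (\<Sum>a\<in>S. max 0 (1 - z a)) \<Longrightarrow> L = 1"
      by blast
    define d2 where "d2 a = (if a \<in> S then max 0 (L - z a) else 0)" for a
    have d2_sum: "(\<Sum>a\<in>S. d2 a) = m"
      using L_sum unfolding d2_def by simp
    have total: "(\<Sum>a\<in>S. d1 a + d2 a) = (\<Sum>a\<in>S. d1 a) + m"
      using d2_sum by (simp add: sum.distrib)
    have "item_split cls \<gamma> x S d1 d2"
    proof unfold_locales
      fix a
      show "0 \<le> d2 a" "a \<notin> S \<Longrightarrow> d2 a = 0" unfolding d2_def by simp_all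
      show "a \<in> S \<Longrightarrow> x a + d1 a + d2 a \<le> 1"
        using le_one[of a] L unfolding d2_def z_def by simp
      show "0 < d2 a \<Longrightarrow> \<gamma> \<le> x a + d1 a"
        using 2 unfolding d2_def by (auto split: if_splits)
    next
      show "(\<Sum>a\<in>S. d1 a + d2 a) \<le> 1"
        using total unfolding m_def by simp
      have "(\<Sum>a\<in>S. d1 a + d2 a) = 1 \<or> L = 1"
        using total L_full unfolding m_def by (auto simp: min_def split: if_splits)
      moreover have "\<forall>a\<in>S. L \<le> x a + d1 a + d2 a"
        unfolding d2_def z_def by (simp add: max_def)
      moreover have "\<forall>a. 0 < d2 a \<longrightarrow> x a + d1 a + d2 a \<le> L"
        unfolding d2_def z_def by (simp add: max_def)
      ultimately show "(\<Sum>a\<in>S. d1 a) = 1 \<and> (\<forall>a. d2 a = 0) \<or>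
        (\<exists>L\<ge>\<gamma>. L \<le> 1 \<and> (\<forall>a\<in>S. L \<le> x a + d1 a + d2 a) \<and>
          (\<forall>a. 0 < d2 a \<longrightarrow> x a + d1 a + d2 a \<le> L) \<and> ((\<Sum>a\<in>S. d1 a + d2 a) = 1 \<or> L = 1))"
        using L by blast
    qed
    then show ?thesis by blast
  qed
qed

context item_split
begin

lemma sum_share_superset:
  "finite A \<Longrightarrow> S \<subseteq> A \<Longrightarrow> (\<Sum>a\<in>A. d1 a + d2 a) = (\<Sum>a\<in>S. d1 a + d2 a)"
  using d1_outside d2_outside by (auto intro: sum.mono_neutral_right)

lemma usw_dual_step_saturated:
  assumes "finite A" and "S \<subseteq> A" and total: "(\<Sum>a\<in>S. d1 a) = 1" and no_d2: "\<forall>a. d2 a = 0"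
  shows "dual_step (usw_potential \<gamma>) A x (\<lambda>a. d1 a + d2 a) S 1 (1 + usw_slope \<gamma>)"
proof -
  let ?\<Psi> = "usw_potential \<gamma>" and ?K = "usw_slope \<gamma>"
  have "?\<Psi> (x a + (d1 a + d2 a)) - ?\<Psi> (x a) \<le> ?K * d1 a + (1 + ?K) * exp (1 - 1) * d2 a" for a
    using usw_potential_increase[OF gamma_nonneg gamma_le_one d1_nonneg d2_nonneg d1_below]
      no_d2 by simp
  then have "(\<Sum>a\<in>A. ?\<Psi> (x a + (d1 a + d2 a)) - ?\<Psi> (x a)) \<le> ?K * (\<Sum>a\<in>A. d1 a + d2 a)"
    using no_d2 by (simp add: sum_distrib_left sum_mono)
  moreover have "(\<Sum>a\<in>A. d1 a + d2 a) = 1"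
    using sum_share_superset[OF assms(1,2)] total no_d2 by simp
  moreover have "0 \<le> ?\<Psi> (x a + (d1 a + d2 a))" for a
    using x_nonneg d1_nonneg d2_nonneg
    by (intro usw_potential_nonneg[OF gamma_nonneg gamma_le_one]) (simp add: add_nonneg_nonneg)
  ultimately show ?thesis
    unfolding dual_step_def by (intro exI[of _ 1]) auto
qed

lemma usw_dual_step_filled:
  assumes "finite A" and "S \<subseteq> A" and L: "\<gamma> \<le> L" "L \<le> 1"
    and L_below: "\<forall>a\<in>S. L \<le> x a + d1 a + d2 a"
    and L_above: "\<forall>a. 0 < d2 a \<longrightarrow> x a + d1 a + d2 a \<le> L"
    and full: "(\<Sum>a\<in>S. d1 a + d2 a) = 1 \<or> L = 1"
  shows "dual_step (usw_potential \<gamma>) A x (\<lambda>a. d1 a + d2 a) S 1 (1 + usw_slope \<gamma>)"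
proof -
  let ?\<Psi> = "usw_potential \<gamma>" and ?K = "usw_slope \<gamma>"
  define M where "M = (1 + ?K) * exp (L - 1)"
  have "?\<Psi> (x a + (d1 a + d2 a)) - ?\<Psi> (x a) \<le> M * (d1 a + d2 a)" for a
  proof -
    have "?\<Psi> (x a + d1 a + d2 a) - ?\<Psi> (x a) \<le> ?K * d1 a + M * d2 a"
      unfolding M_def using L_above d2_above
      by (intro usw_potential_increase[OF gamma_nonneg gamma_le_one d1_nonneg d2_nonneg d1_below])
        auto
    also have "\<dots> \<le> M * (d1 a + d2 a)"
      using usw_slope_le[OF gamma_nonneg gamma_le_one L(1)] d1_nonneg[of a]
      unfolding M_def by (simp add: distrib_left mult_right_mono)
    finally show ?thesis by (simp add: add.assoc)
  qed
  then have gain: "(\<Sum>a\<in>A. ?\<Psi> (x a + (d1 a + d2 a)) - ?\<Psi> (x a)) \<le> M * (\<Sum>a\<in>A. d1 a + d2 a)"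
    by (simp add: sum_distrib_left sum_mono)
  have "?\<Psi> L = M - ?K"
    unfolding M_def using usw_potential_above[OF gamma_nonneg gamma_le_one L(1)] by simp
  then have "M * (\<Sum>a\<in>A. d1 a + d2 a) + (1 - ?\<Psi> L) = (1 + ?K) * (\<Sum>a\<in>A. d1 a + d2 a)"
    using full sum_share_superset[OF assms(1,2)] unfolding M_def by auto
  moreover have "?\<Psi> L \<le> 1"
    using monoD[OF mono_usw_potential[OF gamma_nonneg gamma_le_one] L(2)]
      usw_potential_one[OF gamma_nonneg gamma_le_one] by simp
  moreover have "?\<Psi> L \<le> ?\<Psi> (x a + (d1 a + d2 a))" if "a \<in> S" for a
    using L_below that
    by (intro monoD[OF mono_usw_potential[OF gamma_nonneg gamma_le_one]]) (simp add: add.assoc)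
  ultimately show ?thesis
    using gain unfolding dual_step_def by (intro exI[of _ "1 - ?\<Psi> L"]) auto
qed

lemma usw_dual_step:
  "finite A \<Longrightarrow> S \<subseteq> A \<Longrightarrow>
     dual_step (usw_potential \<gamma>) A x (\<lambda>a. d1 a + d2 a) S 1 (1 + usw_slope \<gamma>)"
  using second_phase usw_dual_step_saturated usw_dual_step_filled by blast

text \<open>If an agent of class i stays below \<gamma>, the item was used up in the first phase and
  class i received at least as much of it as any other class.\<close>

lemma cef_dual_step_unfilled:
  assumes "0 < \<gamma>" and i: "i < length cls" and j: "j < length cls"
    and b: "b \<in> S \<inter> cls ! i" "x b + d1 b + d2 b < \<gamma>"
  shows "dual_step (cef_potential \<gamma>) (cls ! i) x (\<lambda>a. d1 a + d2 a) (S \<inter> cls ! i)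
           (\<Sum>a\<in>cls ! j. d1 a + d2 a) (exp \<gamma> / (exp \<gamma> - 1))"
proof -
  let ?\<phi> = "cef_potential \<gamma>" and ?R = "exp \<gamma> / (exp \<gamma> - 1)"
  obtain L where "L \<le> \<gamma>" and L_below: "\<forall>a\<in>S \<inter> cls ! i. L \<le> x a + d1 a"
    and L_above: "\<forall>a\<in>cls ! i. 0 < d1 a \<longrightarrow> x a + d1 a \<le> L"
    and fair: "L < \<gamma> \<Longrightarrow> \<forall>j<length cls. (\<Sum>a\<in>cls ! j. d1 a) \<le> (\<Sum>a\<in>cls ! i. d1 a)"
    using class_level[OF i] by blast
  have "L \<le> x b + d1 b" using L_below b(1) by blast
  then have "L < \<gamma>" using b(2) d2_nonneg[of b] by linarith
  have no_d2: "d2 a = 0" for a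
    using second_phase b by (force simp: not_le)
  define E where "E = exp L / (exp \<gamma> - 1)"
  define \<beta> where "\<beta> = 1 - ?\<phi> L"
  have "?\<phi> (x a + d1 a) - ?\<phi> (x a) \<le> d1 a * E" if "a \<in> cls ! i" for a
  proof (cases "d1 a = 0")
    case False
    then show ?thesis
      using cef_potential_step[OF assms(1) d1_nonneg[of a], of "x a" L] \<open>L \<le> \<gamma>\<close> L_above that
        d1_nonneg[of a] unfolding E_def by simp
  qed simp
  then have "(\<Sum>a\<in>cls ! i. ?\<phi> (x a + (d1 a + d2 a)) - ?\<phi> (x a)) \<le> (\<Sum>a\<in>cls ! i. d1 a) * E"
    by (simp add: no_d2 sum_distrib_right sum_mono)
  moreover have "(\<Sum>a\<in>cls ! j. d1 a + d2 a) * \<beta> \<le> (\<Sum>a\<in>cls ! i. d1 a) * \<beta>"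
    using fair[OF \<open>L < \<gamma>\<close>] j cef_potential_le_one[OF assms(1)]
    unfolding \<beta>_def by (simp add: no_d2 mult_right_mono)
  ultimately have "(\<Sum>a\<in>cls ! i. ?\<phi> (x a + (d1 a + d2 a)) - ?\<phi> (x a))
      + (\<Sum>a\<in>cls ! j. d1 a + d2 a) * \<beta> \<le> (\<Sum>a\<in>cls ! i. d1 a) * (E + \<beta>)"
    by (simp add: distrib_left)
  also have "E + \<beta> = ?R"
  proof -
    have "?\<phi> L = (exp L - 1) / (exp \<gamma> - 1)"
      unfolding cef_potential_def using \<open>L \<le> \<gamma>\<close> by simp
    moreover have "exp \<gamma> \<noteq> 1" using assms(1) by simp
    ultimately show ?thesis unfolding E_def \<beta>_def by (simp add: field_simps)
  qed
  moreover have "1 \<le> ?\<phi> (x a + (d1 a + d2 a)) + \<beta>" if "a \<in> S \<inter> cls ! i" for a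
    using monoD[OF mono_cef_potential[OF assms(1)], of L "x a + d1 a"] L_below that
    unfolding \<beta>_def by (simp add: no_d2)
  moreover have "0 \<le> \<beta>"
    using cef_potential_le_one[OF assms(1)] unfolding \<beta>_def by simp
  ultimately show ?thesis
    unfolding dual_step_def by (intro exI[of _ \<beta>]) (simp add: no_d2 mult.commute)
qed

lemma cef_dual_step_filled:
  assumes "0 < \<gamma>" and filled: "\<forall>a\<in>S \<inter> cls ! i. \<gamma> \<le> x a + d1 a + d2 a"
  shows "dual_step (cef_potential \<gamma>) (cls ! i) x (\<lambda>a. d1 a + d2 a) (S \<inter> cls ! i) w
           (exp \<gamma> / (exp \<gamma> - 1))"
proof -
  let ?\<phi> = "cef_potential \<gamma>" and ?R = "exp \<gamma> / (exp \<gamma> - 1)"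
  have "?\<phi> (x a + (d1 a + d2 a)) - ?\<phi> (x a) \<le> (d1 a + d2 a) * ?R" for a
    using cef_potential_lipschitz[OF assms(1), of "x a" "x a + (d1 a + d2 a)"]
      d1_nonneg[of a] d2_nonneg[of a] by simp
  then have "(\<Sum>a\<in>cls ! i. ?\<phi> (x a + (d1 a + d2 a)) - ?\<phi> (x a)) \<le> ?R * (\<Sum>a\<in>cls ! i. d1 a + d2 a)"
    by (simp add: sum_distrib_left sum_mono mult.commute)
  moreover have "1 \<le> ?\<phi> (x a + (d1 a + d2 a))" if "a \<in> S \<inter> cls ! i" for a
    using filled that by (simp add: cef_potential_above[OF assms(1)] add.assoc)
  ultimately show ?thesis
    unfolding dual_step_def by (intro exI[of _ 0]) auto
qed

lemma cef_dual_step: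
  "0 < \<gamma> \<Longrightarrow> i < length cls \<Longrightarrow> j < length cls \<Longrightarrow>
     dual_step (cef_potential \<gamma>) (cls ! i) x (\<lambda>a. d1 a + d2 a) (S \<inter> cls ! i)
       (\<Sum>a\<in>cls ! j. d1 a + d2 a) (exp \<gamma> / (exp \<gamma> - 1))"
  using cef_dual_step_unfilled cef_dual_step_filled by (meson not_le)

end

section \<open>The water-filling algorithm\<close>

lemma opt_val_le:
  assumes "\<And>q. 0 \<le> y q"
    and "\<And>z. \<forall>q a. 0 \<le> z q a \<Longrightarrow>
       \<forall>q a. z q a \<noteq> 0 \<longrightarrow> q < length seq \<and> a \<in> seq ! q \<and> a \<in> cls ! i \<Longrightarrow>
       \<forall>q<length seq. (\<Sum>a\<in>cls ! i. z q a) \<le> y q \<Longrightarrow>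
       \<forall>a\<in>cls ! i. (\<Sum>q<length seq. z q a) \<le> 1 \<Longrightarrow>
       (\<Sum>q<length seq. \<Sum>a\<in>cls ! i. z q a) \<le> B"
  shows "opt_val cls seq i y \<le> B"
  unfolding opt_val_def
proof (rule cSup_least)
  have "(\<Sum>q<length seq. \<Sum>a\<in>cls ! i. (0::real)) = 0" by simp
  then show "{(\<Sum>q<length seq. \<Sum>a\<in>cls ! i. z q a) | z. (\<forall>q a. 0 \<le> z q a) \<and>
      (\<forall>q a. z q a \<noteq> 0 \<longrightarrow> q < length seq \<and> a \<in> seq ! q \<and> a \<in> cls ! i) \<and>
      (\<forall>q<length seq. (\<Sum>a\<in>cls ! i. z q a) \<le> y q) \<and>
      (\<forall>a\<in>cls ! i. (\<Sum>q<length seq. z q a) \<le> 1)} \<noteq> {}"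
    using assms(1) by (intro ex_in_conv[THEN iffD1] exI[of _ 0] CollectI exI[of _ "\<lambda>_ _. 0"]) auto
qed (use assms(2) in blast)

lemma usw_eq_sum_agents:
  assumes "\<forall>i<length cls. finite (cls ! i)"
    and "\<forall>i<length cls. \<forall>j<length cls. i \<noteq> j \<longrightarrow> cls ! i \<inter> cls ! j = {}"
  shows "usw cls seq X = (\<Sum>q<length seq. \<Sum>a\<in>agents cls. X q a)"
proof -
  have "usw cls seq X = (\<Sum>i<length cls. \<Sum>a\<in>agents cls \<inter> cls ! i. \<Sum>q<length seq. X q a)"
    unfolding usw_def class_value_def agent_value_def agents_conv_classes
    by (intro sum.cong) auto
  also have "\<dots> = (\<Sum>a\<in>agents cls. \<Sum>q<length seq. X q a)"
    by (rule sum_agents_by_class[OF assms order_refl, symmetric])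
  finally show ?thesis by (rule trans) (rule sum.swap)
qed

definition split_item :: "'a set list \<Rightarrow> real \<Rightarrow> ('a \<Rightarrow> real) \<Rightarrow> 'a set \<Rightarrow> ('a \<Rightarrow> real) \<times> ('a \<Rightarrow> real)"
  where "split_item cls \<gamma> x S = (SOME p. item_split cls \<gamma> x S (fst p) (snd p))"

definition item_share :: "'a set list \<Rightarrow> real \<Rightarrow> ('a \<Rightarrow> real) \<Rightarrow> 'a set \<Rightarrow> 'a \<Rightarrow> real"
  where "item_share cls \<gamma> x S a = fst (split_item cls \<gamma> x S) a + snd (split_item cls \<gamma> x S) a"

definition levels :: "'a set list \<Rightarrow> real \<Rightarrow> 'a set list \<Rightarrow> 'a \<Rightarrow> real"
  where "levels cls \<gamma> = foldl (\<lambda>x S a. x a + item_share cls \<gamma> x S a) (\<lambda>_. 0)"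

definition water_filling :: "real \<Rightarrow> 'a online_alg"
  where "water_filling \<gamma> cls items = item_share cls \<gamma> (levels cls \<gamma> (butlast items)) (last items)"

lemma item_split_split_item:
  fixes x :: "'a \<Rightarrow> real"
  assumes "\<forall>i<length cls. finite (cls ! i)"
    and "\<forall>i<length cls. \<forall>j<length cls. i \<noteq> j \<longrightarrow> cls ! i \<inter> cls ! j = {}"
    and "S \<subseteq> agents cls" and "\<And>a. 0 \<le> x a" "\<And>a. x a \<le> 1" and "0 \<le> \<gamma>" "\<gamma> \<le> 1"
  shows "item_split cls \<gamma> x S (fst (split_item cls \<gamma> x S)) (snd (split_item cls \<gamma> x S))"
proof -
  have "\<exists>d1 d2. item_split cls \<gamma> x S d1 d2"
    by (rule item_split_exists) (use assms in auto)
  then have "\<exists>p. item_split cls \<gamma> x S (fst p) (snd p)" by auto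
  from someI_ex[OF this] show ?thesis
    unfolding split_item_def .
qed

lemma levels_snoc:
  "levels cls \<gamma> (xs @ [S]) a = levels cls \<gamma> xs a + item_share cls \<gamma> (levels cls \<gamma> xs) S a"
  unfolding levels_def by simp

lemma run_water_filling:
  "run (water_filling \<gamma>) cls seq q a =
     (if q < length seq then item_share cls \<gamma> (levels cls \<gamma> (take q seq)) (seq ! q) a else 0)"
  by (simp add: run_def water_filling_def take_Suc_conv_app_nth)

locale online_instance =
  fixes cls seq :: "'a set list" and \<gamma> :: real
  assumes valid_instance: "is_instance cls seq"
    and gamma_nonneg: "0 \<le> \<gamma>" and gamma_le_one: "\<gamma> \<le> 1"
begin

abbreviation level :: "nat \<Rightarrow> 'a \<Rightarrow> real"
  where "level q \<equiv> levels cls \<gamma> (take q seq)"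

abbreviation phase1 :: "nat \<Rightarrow> 'a \<Rightarrow> real"
  where "phase1 q \<equiv> fst (split_item cls \<gamma> (level q) (seq ! q))"

abbreviation phase2 :: "nat \<Rightarrow> 'a \<Rightarrow> real"
  where "phase2 q \<equiv> snd (split_item cls \<gamma> (level q) (seq ! q))"

abbreviation alloc :: "nat \<Rightarrow> 'a \<Rightarrow> real"
  where "alloc \<equiv> run (water_filling \<gamma>) cls seq"

lemma finite_classes: "\<forall>i<length cls. finite (cls ! i)"
  and disjoint_classes: "\<forall>i<length cls. \<forall>j<length cls. i \<noteq> j \<longrightarrow> cls ! i \<inter> cls ! j = {}"
  and items_subset: "q < length seq \<Longrightarrow> seq ! q \<subseteq> agents cls"
  using valid_instance unfolding is_instance_def by blast+

lemma finite_agents: "finite (agents cls)"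
  using finite_classes unfolding agents_conv_classes by blast

lemma alloc_eq: "q < length seq \<Longrightarrow> alloc q = (\<lambda>a. phase1 q a + phase2 q a)"
  by (simp add: fun_eq_iff run_water_filling item_share_def)

lemma level_Suc: "q < length seq \<Longrightarrow> level (Suc q) a = level q a + (phase1 q a + phase2 q a)"
  by (simp add: take_Suc_conv_app_nth levels_snoc item_share_def)

lemma level_eq_sum: "q \<le> length seq \<Longrightarrow> level q = (\<lambda>a. \<Sum>k<q. alloc k a)"
proof (induction q)
  case 0
  then show ?case by (simp add: levels_def)
next
  case (Suc q)
  then show ?case by (simp add: level_Suc alloc_eq)
qed

lemma level_bounds: "q \<le> length seq \<Longrightarrow> 0 \<le> level q a \<and> level q a \<le> 1"
proof (induction q arbitrary: a)
  case 0
  then show ?case by (simp add: levels_def)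
next
  case (Suc q)
  then have q: "q < length seq" by simp
  have "0 \<le> level q a" "level q a \<le> 1" for a
    using Suc.IH q by auto
  then interpret item_split cls \<gamma> "level q" "seq ! q" "phase1 q" "phase2 q"
    by (rule item_split_split_item[OF finite_classes disjoint_classes items_subset[OF q] _ _
          gamma_nonneg gamma_le_one])
  show ?case
  proof (cases "a \<in> seq ! q")
    case True
    then show ?thesis
      using x_nonneg[of a] d1_nonneg[of a] d2_nonneg[of a] level_le_one[of a]
      unfolding level_Suc[OF q] by linarith
  next
    case False
    then show ?thesis
      using x_nonneg[of a] d1_outside[of a] d2_outside[of a] \<open>level q a \<le> 1\<close>
      unfolding level_Suc[OF q] by simp
  qed
qed

lemma item_split_at: "q < length seq \<Longrightarrow> item_split cls \<gamma> (level q) (seq ! q) (phase1 q) (phase2 q)"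
  using level_bounds[of q]
  by (intro item_split_split_item finite_classes disjoint_classes items_subset
      gamma_nonneg gamma_le_one) auto

lemma alloc_nonneg: "0 \<le> alloc q a"
proof (cases "q < length seq")
  case True
  then interpret item_split cls \<gamma> "level q" "seq ! q" "phase1 q" "phase2 q"
    by (rule item_split_at)
  show ?thesis using d1_nonneg[of a] d2_nonneg[of a] alloc_eq[OF True] by simp
qed (simp add: run_def)

lemma alloc_outside: "a \<notin> seq ! q \<Longrightarrow> alloc q a = 0"
proof (cases "q < length seq")
  case True
  then interpret item_split cls \<gamma> "level q" "seq ! q" "phase1 q" "phase2 q"
    by (rule item_split_at)
  show "a \<notin> seq ! q \<Longrightarrow> ?thesis" using d1_outside d2_outside alloc_eq[OF True] by simp
qed (simp add: run_def)

lemma water_filling_valid: "frac_matching cls seq alloc"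
  unfolding frac_matching_def
proof (intro conjI allI impI)
  fix q a
  show "0 \<le> alloc q a" by (rule alloc_nonneg)
  show "alloc q a \<le> 1"
  proof (cases "q < length seq")
    case True
    then show ?thesis
      using level_bounds[of q a] level_bounds[of "Suc q" a] level_Suc[OF True, of a]
      by (simp add: alloc_eq)
  qed (simp add: run_def)
  show "q < length seq" if "alloc q a \<noteq> 0"
    using that by (auto simp: run_def split: if_splits)
  show "a \<in> seq ! q" if "alloc q a \<noteq> 0"
    using that alloc_outside by blast
  show "(\<Sum>q<length seq. alloc q a) \<le> 1"
    using level_bounds[of "length seq" a] level_eq_sum[of "length seq"] by simp
next
  fix q
  show "(\<Sum>a\<in>agents cls. alloc q a) \<le> 1"
  proof (cases "q < length seq")
    case True
    then interpret item_split cls \<gamma> "level q" "seq ! q" "phase1 q" "phase2 q"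
      by (rule item_split_at)
    have "(\<Sum>a\<in>agents cls. alloc q a) = (\<Sum>a\<in>seq ! q. alloc q a)"
      using finite_agents items_subset[OF True] alloc_outside
      by (intro sum.mono_neutral_right) auto
    then show ?thesis using total_le_one alloc_eq[OF True] by simp
  qed (simp add: run_def)
qed

lemma water_filling_usw:
  assumes "frac_matching cls seq Y"
  shows "(1 - exp (\<gamma> - 1) / (\<gamma> + 1)) * usw cls seq Y \<le> usw cls seq alloc"
proof -
  let ?K = "usw_slope \<gamma>"
  have "(\<Sum>q<length seq. \<Sum>a\<in>agents cls. Y q a)
      \<le> (1 + ?K) * (\<Sum>q<length seq. \<Sum>a\<in>agents cls. alloc q a)"
  proof (rule online_primal_dual_bound[where T="\<lambda>q. seq ! q"])
    fix q assume q: "q < length seq"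
    interpret item_split cls \<gamma> "level q" "seq ! q" "phase1 q" "phase2 q"
      using q by (rule item_split_at)
    show "dual_step (usw_potential \<gamma>) (agents cls) (\<lambda>a. \<Sum>k<q. alloc k a) (alloc q) (seq ! q) 1
        (1 + ?K)"
      unfolding level_eq_sum[symmetric, OF less_imp_le[OF q]] alloc_eq[OF q]
      by (rule usw_dual_step[OF finite_agents items_subset[OF q]])
  qed (use assms finite_agents alloc_nonneg in
        \<open>auto simp: frac_matching_def mono_usw_potential usw_potential_zero gamma_nonneg gamma_le_one\<close>)
  then have "usw cls seq Y \<le> (1 + ?K) * usw cls seq alloc"
    by (simp add: usw_eq_sum_agents[OF finite_classes disjoint_classes])
  moreover have "0 < 1 + ?K"
    using usw_slope_nonneg[OF gamma_nonneg gamma_le_one] by simp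
  ultimately show ?thesis
    by (simp add: usw_ratio[OF gamma_nonneg gamma_le_one] divide_le_eq mult.commute)
qed

lemma water_filling_cef:
  assumes i: "i < length cls" and j: "j < length cls"
  shows "(1 - exp (- \<gamma>)) * opt_val cls seq i (class_alloc cls alloc j)
           \<le> class_value cls seq alloc i"
proof (cases "\<gamma> = 0")
  case True
  have "0 \<le> class_value cls seq alloc i"
    unfolding class_value_def agent_value_def by (simp add: sum_nonneg alloc_nonneg)
  then show ?thesis using True by simp
next
  case False
  then have \<gamma>: "0 < \<gamma>" using gamma_nonneg by simp
  let ?R = "exp \<gamma> / (exp \<gamma> - 1)"
  have value_eq: "class_value cls seq alloc i = (\<Sum>q<length seq. \<Sum>a\<in>cls ! i. alloc q a)"
    unfolding class_value_def agent_value_def by (rule sum.swap)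
  have opt_le: "opt_val cls seq i (class_alloc cls alloc j) \<le> ?R * class_value cls seq alloc i"
  proof (rule opt_val_le)
    show "0 \<le> class_alloc cls alloc j q" for q
      unfolding class_alloc_def by (simp add: sum_nonneg alloc_nonneg)
    fix z :: "nat \<Rightarrow> 'a \<Rightarrow> real"
    assume "\<forall>q a. 0 \<le> z q a"
      and "\<forall>q a. z q a \<noteq> 0 \<longrightarrow> q < length seq \<and> a \<in> seq ! q \<and> a \<in> cls ! i"
      and "\<forall>q<length seq. (\<Sum>a\<in>cls ! i. z q a) \<le> class_alloc cls alloc j q"
      and "\<forall>a\<in>cls ! i. (\<Sum>q<length seq. z q a) \<le> 1"
    then show "(\<Sum>q<length seq. \<Sum>a\<in>cls ! i. z q a) \<le> ?R * class_value cls seq alloc i"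
      unfolding value_eq
    proof (intro online_primal_dual_bound[where T="\<lambda>q. seq ! q \<inter> cls ! i"])
      fix q assume q: "q < length seq"
      interpret item_split cls \<gamma> "level q" "seq ! q" "phase1 q" "phase2 q"
        using q by (rule item_split_at)
      show "dual_step (cef_potential \<gamma>) (cls ! i) (\<lambda>a. \<Sum>k<q. alloc k a) (alloc q)
          (seq ! q \<inter> cls ! i) (class_alloc cls alloc j q) ?R"
        unfolding level_eq_sum[symmetric, OF less_imp_le[OF q]] alloc_eq[OF q]
          class_alloc_def alloc_eq[OF q]
        by (rule cef_dual_step[OF \<gamma> i j])
    qed (use finite_classes i alloc_nonneg in
          \<open>auto simp: mono_cef_potential[OF \<gamma>] cef_potential_zero[OF \<gamma>]\<close>)
  qed
  have "(1 - exp (- \<gamma>)) * opt_val cls seq i (class_alloc cls alloc j)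
      \<le> (1 - exp (- \<gamma>)) * (?R * class_value cls seq alloc i)"
    using opt_le \<gamma> by (intro mult_left_mono) auto
  also have "(1 - exp (- \<gamma>)) * ?R = 1"
    using \<gamma> by (simp add: exp_minus field_simps)
  then have "(1 - exp (- \<gamma>)) * (?R * class_value cls seq alloc i) = class_value cls seq alloc i"
    by (metis mult.assoc mult_1)
  finally show ?thesis .
qed

end

theorem theorem4:
  fixes \<gamma> :: real
  assumes "0 \<le> \<gamma>" and "\<gamma> \<le> 1"
  shows "\<exists>P :: 'a online_alg pmf. valid_rand_alg P \<and>
           is_USW (1 - exp (\<gamma> - 1) / (\<gamma> + 1)) P \<and>
           is_CEF (1 - exp (- \<gamma>)) P"
proof (intro exI[of _ "return_pmf (water_filling \<gamma>)"] conjI)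
  have "online_instance cls seq \<gamma>" if "is_instance cls seq" for cls seq :: "'a set list"
    using that assms by unfold_locales
  note guarantee = online_instance.water_filling_valid[OF this]
    online_instance.water_filling_usw[OF this] online_instance.water_filling_cef[OF this]
  show "valid_rand_alg (return_pmf (water_filling \<gamma>) :: 'a online_alg pmf)"
    unfolding valid_rand_alg_def valid_online_alg_def using guarantee(1) by simp
  show "is_USW (1 - exp (\<gamma> - 1) / (\<gamma> + 1)) (return_pmf (water_filling \<gamma>) :: 'a online_alg pmf)"
    unfolding is_USW_def using guarantee(2) by simp
  show "is_CEF (1 - exp (- \<gamma>)) (return_pmf (water_filling \<gamma>) :: 'a online_alg pmf)"
    unfolding is_CEF_def using guarantee(3) by simp
qed

end
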